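(* Let $G=(V,E)$ be a bispanning graph with $|V|\ge 3$. (i) If $G$ contains a pair of parallel edges, then $G$ is composite. (ii) If $G$ is atomic, then $G$ is simple. (iii) If $G$ contains a cut-vertex (vertex-connectivity $1$), then $G$ is composite. (iv) If $G$ has edge-connectivity $2$, then $G$ is composite. (v) If $G$ contains a vertex of degree $2$, then $G$ is composite.
   Context: Graphs are finite, undirected, may have parallel edges, no loops; simple means no parallel edges. A spanning tree of $G$ is $T\subseteq E$ with $(V,T)$ connected and acyclic; $G$ is bispanning if $E$ is the union of two disjoint spanning trees. A bispanning graph $G$ is composite if it contains a subgraph which is bispanning and is neither $G$ itself nor a single vertex; otherwise it is atomic. A cut-vertex is a vertex whose deletion increases the number of connected components. Edge-connectivity is the largest $k$ such that $|E|>k$ and deleting fewer than $k$ edges leaves $G$ connected. *)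

theory Defs
  imports Main
begin

text \<open>Finite multigraphs without loops: a vertex set V, an edge set E (edges are
abstract objects, so parallel edges are allowed) and an incidence map
ends assigning to each edge its 2-element set of endpoints.\<close>

definition mgraph :: "'v set \<Rightarrow> 'e set \<Rightarrow> ('e \<Rightarrow> 'v set) \<Rightarrow> bool" where
  "mgraph V E ends \<longleftrightarrow> finite V \<and> finite E \<and>
     (\<forall>e\<in>E. ends e \<subseteq> V \<and> card (ends e) = 2)"

definition adj :: "('e \<Rightarrow> 'v set) \<Rightarrow> 'e set \<Rightarrow> ('v \<times> 'v) set" where
  "adj ends F = {(x, y). \<exists>e\<in>F. ends e = {x, y}}"

definition reach :: "('e \<Rightarrow> 'v set) \<Rightarrow> 'e set \<Rightarrow> 'v \<Rightarrow> 'v \<Rightarrow> bool" where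
  "reach ends F u v \<longleftrightarrow> (u, v) \<in> (adj ends F)\<^sup>*"

definition connected_on :: "('e \<Rightarrow> 'v set) \<Rightarrow> 'v set \<Rightarrow> 'e set \<Rightarrow> bool" where
  "connected_on ends V F \<longleftrightarrow> V \<noteq> {} \<and> (\<forall>u\<in>V. \<forall>v\<in>V. reach ends F u v)"

definition acyclic_on :: "('e \<Rightarrow> 'v set) \<Rightarrow> 'e set \<Rightarrow> bool" where
  "acyclic_on ends F \<longleftrightarrow>
     (\<forall>e\<in>F. \<forall>x y. ends e = {x, y} \<longrightarrow> \<not> reach ends (F - {e}) x y)"

definition spanning_tree :: "'v set \<Rightarrow> 'e set \<Rightarrow> ('e \<Rightarrow> 'v set) \<Rightarrow> 'e set \<Rightarrow> bool" where
  "spanning_tree V E ends T \<longleftrightarrow> T \<subseteq> E \<and> connected_on ends V T \<and> acyclic_on ends T"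

definition bispanning :: "'v set \<Rightarrow> 'e set \<Rightarrow> ('e \<Rightarrow> 'v set) \<Rightarrow> bool" where
  "bispanning V E ends \<longleftrightarrow> mgraph V E ends \<and>
     (\<exists>T1 T2. spanning_tree V E ends T1 \<and> spanning_tree V E ends T2 \<and>
              T1 \<inter> T2 = {} \<and> T1 \<union> T2 = E)"

definition subgraph :: "'v set \<Rightarrow> 'e set \<Rightarrow> 'v set \<Rightarrow> 'e set \<Rightarrow> ('e \<Rightarrow> 'v set) \<Rightarrow> bool" where
  "subgraph V' E' V E ends \<longleftrightarrow> V' \<subseteq> V \<and> E' \<subseteq> E \<and> (\<forall>e\<in>E'. ends e \<subseteq> V')"

definition composite :: "'v set \<Rightarrow> 'e set \<Rightarrow> ('e \<Rightarrow> 'v set) \<Rightarrow> bool" where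
  "composite V E ends \<longleftrightarrow> bispanning V E ends \<and>
     (\<exists>V' E'. subgraph V' E' V E ends \<and> bispanning V' E' ends \<and>
              (V', E') \<noteq> (V, E) \<and> card V' \<noteq> 1)"

definition atomic :: "'v set \<Rightarrow> 'e set \<Rightarrow> ('e \<Rightarrow> 'v set) \<Rightarrow> bool" where
  "atomic V E ends \<longleftrightarrow> bispanning V E ends \<and> \<not> composite V E ends"

definition has_parallel_edges :: "'e set \<Rightarrow> ('e \<Rightarrow> 'v set) \<Rightarrow> bool" where
  "has_parallel_edges E ends \<longleftrightarrow> (\<exists>e1\<in>E. \<exists>e2\<in>E. e1 \<noteq> e2 \<and> ends e1 = ends e2)"

definition simple_graph :: "'e set \<Rightarrow> ('e \<Rightarrow> 'v set) \<Rightarrow> bool" where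
  "simple_graph E ends \<longleftrightarrow> \<not> has_parallel_edges E ends"

definition num_components :: "('e \<Rightarrow> 'v set) \<Rightarrow> 'v set \<Rightarrow> 'e set \<Rightarrow> nat" where
  "num_components ends V F = card {{u \<in> V. reach ends F w u} | w. w \<in> V}"

definition delete_vertex_edges :: "('e \<Rightarrow> 'v set) \<Rightarrow> 'e set \<Rightarrow> 'v \<Rightarrow> 'e set" where
  "delete_vertex_edges ends E v = {e \<in> E. v \<notin> ends e}"

definition cut_vertex :: "'v set \<Rightarrow> 'e set \<Rightarrow> ('e \<Rightarrow> 'v set) \<Rightarrow> 'v \<Rightarrow> bool" where
  "cut_vertex V E ends v \<longleftrightarrow> v \<in> V \<and>
     num_components ends (V - {v}) (delete_vertex_edges ends E v) > num_components ends V E"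

definition edge_connectivity :: "'v set \<Rightarrow> 'e set \<Rightarrow> ('e \<Rightarrow> 'v set) \<Rightarrow> nat" where
  "edge_connectivity V E ends = (GREATEST k. card E > k \<and>
     (\<forall>F. F \<subseteq> E \<and> card F < k \<longrightarrow> connected_on ends V (E - F)))"

definition degree :: "'e set \<Rightarrow> ('e \<Rightarrow> 'v set) \<Rightarrow> 'v \<Rightarrow> nat" where
  "degree E ends v = card {e \<in> E. v \<in> ends e}"

end

theory Submission
  imports Defs
begin

text \<open>Every spanning tree leaves each nonempty proper vertex set S by at least one
edge, and the two trees of a bispanning graph are edge-disjoint. So if at most two
edges leave S, each tree leaves S by exactly one edge, and deleting that edge shows
that the tree restricted to S is still connected: the subgraph induced by S is
bispanning. As |V| \<ge> 3, one of S and V - S has at least two vertices, which makes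
G composite. A vertex of degree 2 and a 2-edge cut are instances of this; two
parallel edges already form a bispanning subgraph on two vertices. At a cut vertex v,
take S = {v} together with one component of G - v: every tree path from S to v stays
inside S, so again both trees restrict to spanning trees of S.\<close>

definition induced_edges :: "('e \<Rightarrow> 'v set) \<Rightarrow> 'v set \<Rightarrow> 'e set \<Rightarrow> 'e set" where
  "induced_edges ends S F = {e\<in>F. ends e \<subseteq> S}"

definition crossing_edges :: "('e \<Rightarrow> 'v set) \<Rightarrow> 'v set \<Rightarrow> 'e set \<Rightarrow> 'e set" where
  "crossing_edges ends S F = {e\<in>F. ends e \<inter> S \<noteq> {} \<and> \<not> ends e \<subseteq> S}"

lemma crossing_edges_Diff:
  assumes "\<forall>e\<in>E. ends e \<subseteq> V"
  shows "crossing_edges ends (V - S) E = crossing_edges ends S E"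
  using assms unfolding crossing_edges_def by blast

lemma crossing_edges_subset:
  "T \<subseteq> E \<Longrightarrow> crossing_edges ends S T = crossing_edges ends S E \<inter> T"
  unfolding crossing_edges_def by blast

lemma card_2_eq_doubleton: "card A = 2 \<Longrightarrow> x \<in> A \<Longrightarrow> y \<in> A \<Longrightarrow> x \<noteq> y \<Longrightarrow> A = {x, y}"
  by (auto simp: card_2_iff)

lemma reach_refl: "reach ends F a a"
  by (simp add: reach_def)

lemma reach_sym: "reach ends F a b \<Longrightarrow> reach ends F b a"
proof -
  have "sym (adj ends F)"
    unfolding adj_def sym_def by (auto simp: insert_commute)
  then show "reach ends F a b \<Longrightarrow> reach ends F b a"
    unfolding reach_def by (metis sym_rtrancl symD)
qed

lemma reach_trans: "reach ends F a b \<Longrightarrow> reach ends F b c \<Longrightarrow> reach ends F a c"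
  unfolding reach_def by (metis rtrancl_trans)

lemma reach_mono: "F \<subseteq> F' \<Longrightarrow> reach ends F a b \<Longrightarrow> reach ends F' a b"
  unfolding reach_def adj_def by (erule rtrancl_mono[THEN subsetD, rotated]) auto

lemma reach_edge: "e \<in> F \<Longrightarrow> ends e = {a, b} \<Longrightarrow> reach ends F a b"
  unfolding reach_def adj_def by (rule r_into_rtrancl) auto

lemma reach_induct[consumes 1, case_names refl step]:
  assumes "reach ends F a b"
    and "P a"
    and "\<And>y z e. reach ends F a y \<Longrightarrow> e \<in> F \<Longrightarrow> ends e = {y, z} \<Longrightarrow> P y \<Longrightarrow> P z"
  shows "P b"
proof -
  have "(a, b) \<in> (adj ends F)\<^sup>*" using assms(1) by (simp add: reach_def)
  then show ?thesis
  proof (induction rule: rtrancl_induct)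
    case base then show ?case using assms(2) .
  next
    case (step y z)
    then obtain e where "e \<in> F" "ends e = {y, z}" unfolding adj_def by auto
    moreover have "reach ends F a y" using step(1) by (simp add: reach_def)
    ultimately show ?case using assms(3) step(3) by blast
  qed
qed

lemma reach_isolated: "reach ends F z w \<Longrightarrow> \<forall>e\<in>F. z \<notin> ends e \<Longrightarrow> w = z"
  by (induction rule: reach_induct) auto

lemma reach_closed:
  assumes "reach ends F a b" "a \<in> S"
    and "\<forall>e\<in>F. ends e \<inter> S \<noteq> {} \<longrightarrow> ends e \<subseteq> S"
  shows "b \<in> S \<and> reach ends (induced_edges ends S F) a b"
  using assms(1)
proof (induction rule: reach_induct)
  case refl then show ?case using assms(2) reach_refl by metis
next
  case (step y z e)
  then have "ends e \<subseteq> S" using assms(3) by auto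
  then have "z \<in> S" "e \<in> induced_edges ends S F" using step by (auto simp: induced_edges_def)
  then show ?case using step reach_trans reach_edge by metis
qed

lemma crossing_edges_nonempty:
  assumes "reach ends F a b" "a \<in> S" "b \<notin> S"
  shows "crossing_edges ends S F \<noteq> {}"
  using reach_closed[OF assms(1,2)] assms(3) unfolding crossing_edges_def by blast

lemma reach_delete_edge:
  assumes "reach ends F a b" "ends c = {x, y}"
  shows "reach ends (F - {c}) a b \<or> reach ends (F - {c}) x b \<or> reach ends (F - {c}) y b"
  using assms(1)
proof (induction rule: reach_induct)
  case refl then show ?case using reach_refl by metis
next
  case (step u z e)
  show ?case
  proof (cases "e = c")
    case True
    then have "z = x \<or> z = y" using step assms(2) by auto
    then show ?thesis using reach_refl by metis
  next
    case False
    then have "e \<in> F - {c}" using step by auto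
    then show ?thesis using step reach_trans reach_edge by metis
  qed
qed

lemma connected_onI:
  assumes "r \<in> S" "\<forall>z\<in>S. reach ends F r z"
  shows "connected_on ends S F"
  unfolding connected_on_def
proof (intro conjI ballI)
  show "S \<noteq> {}" using assms(1) by blast
  fix u v assume "u \<in> S" "v \<in> S"
  then have "reach ends F r u" "reach ends F r v" using assms(2) by blast+
  then show "reach ends F u v" using reach_sym reach_trans by metis
qed

lemma connected_on_mono: "connected_on ends V F \<Longrightarrow> F \<subseteq> F' \<Longrightarrow> connected_on ends V F'"
  unfolding connected_on_def using reach_mono by metis

lemma acyclic_on_mono: "acyclic_on ends F \<Longrightarrow> F' \<subseteq> F \<Longrightarrow> acyclic_on ends F'"
  unfolding acyclic_on_def by (meson Diff_mono order_refl reach_mono subsetD)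

text \<open>Deleting the only edge c of F that leaves S cannot disconnect S: a walk from the
inner end of c to a vertex of S either avoids c or restarts at the outer end of c,
from where F - {c} never re-enters S.\<close>

lemma connected_on_induced_if_one_crossing:
  assumes conn: "connected_on ends V F" and edges: "\<forall>e\<in>F. ends e \<subseteq> V \<and> card (ends e) = 2"
    and SV: "S \<subseteq> V" and cross: "crossing_edges ends S F = {c}"
  shows "connected_on ends S (induced_edges ends S F)"
proof -
  have "c \<in> crossing_edges ends S F" using cross by simp
  then have c: "c \<in> F" "ends c \<inter> S \<noteq> {}" "\<not> ends c \<subseteq> S"
    by (simp_all add: crossing_edges_def)
  then obtain x y where x: "x \<in> ends c" "x \<in> S" and y: "y \<in> ends c" "y \<notin> S"
    by blast
  have "card (ends c) = 2" "ends c \<subseteq> V" using edges c(1) by simp_all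
  then have xy: "ends c = {x, y}" and "y \<in> V"
    using x y card_2_eq_doubleton[of "ends c" x y] by blast+
  have others: "ends e \<inter> S = {} \<or> ends e \<subseteq> S" if "e \<in> F - {c}" for e
  proof -
    have "e \<notin> crossing_edges ends S F" using that cross by auto
    then show ?thesis using that by (auto simp: crossing_edges_def)
  qed
  have closed_S: "\<forall>e\<in>F - {c}. ends e \<inter> S \<noteq> {} \<longrightarrow> ends e \<subseteq> S"
    using others by blast
  have closed_outside: "\<forall>e\<in>F - {c}. ends e \<inter> (V - S) \<noteq> {} \<longrightarrow> ends e \<subseteq> V - S"
    using others edges by blast
  have "reach ends (induced_edges ends S F) x z" if zS: "z \<in> S" for z
  proof -
    have "reach ends F x z"
      using conn \<open>x \<in> S\<close> zS SV unfolding connected_on_def by blast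
    from reach_delete_edge[OF this xy]
    have "reach ends (F - {c}) x z \<or> reach ends (F - {c}) y z" by blast
    moreover have "\<not> reach ends (F - {c}) y z"
      using reach_closed[OF _ _ closed_outside] \<open>y \<in> V\<close> \<open>y \<notin> S\<close> zS by blast
    ultimately have "reach ends (F - {c}) x z" by blast
    then have "reach ends (induced_edges ends S (F - {c})) x z"
      using reach_closed[OF _ \<open>x \<in> S\<close> closed_S] by blast
    then show ?thesis
      by (rule reach_mono[rotated]) (auto simp: induced_edges_def)
  qed
  then show ?thesis using connected_onI[OF \<open>x \<in> S\<close>] by blast
qed

text \<open>If every edge meeting S - {v} stays inside S, a walk from z \<in> S to v stays in S
until it first reaches v.\<close>

lemma connected_on_induced_if_attached_at:
  assumes conn: "connected_on ends V F"
    and SV: "S \<subseteq> V" and vS: "v \<in> S"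
    and closed: "\<forall>e\<in>F. ends e \<inter> (S - {v}) \<noteq> {} \<longrightarrow> ends e \<subseteq> S"
  shows "connected_on ends S (induced_edges ends S F)"
proof -
  let ?F = "induced_edges ends S F"
  have "reach ends ?F z v" if zS: "z \<in> S" for z
  proof -
    have "(b \<in> S \<and> reach ends ?F z b) \<or> reach ends ?F z v" if "reach ends F z b" for b
      using that
    proof (induction rule: reach_induct)
      case refl then show ?case using zS reach_refl by metis
    next
      case (step y w e)
      show ?case
      proof (cases "reach ends ?F z v \<or> y = v")
        case True then show ?thesis using step(4) by blast
      next
        case False
        then have yS: "y \<in> S" and r: "reach ends ?F z y" and "y \<noteq> v" using step(4) by auto
        then have eS: "ends e \<subseteq> S" using closed step(2,3) by blast
        then have "e \<in> ?F" using step(2) by (simp add: induced_edges_def)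
        then have "reach ends ?F z w" using r reach_trans reach_edge step(3) by metis
        then show ?thesis using eS step(3) by auto
      qed
    qed
    moreover have "reach ends F z v" using conn zS vS SV unfolding connected_on_def by blast
    ultimately show ?thesis by blast
  qed
  then show ?thesis using connected_onI[OF vS] reach_sym by metis
qed

lemma bispanning_connected: "bispanning V E ends \<Longrightarrow> connected_on ends V E"
  unfolding bispanning_def spanning_tree_def using connected_on_mono by blast

lemma spanning_tree_card_ge_2:
  assumes "mgraph V E ends" "spanning_tree V E ends T" "card V \<ge> 3"
  shows "card T \<ge> 2"
proof -
  have TE: "T \<subseteq> E" and conn: "connected_on ends V T"
    using assms(2) by (auto simp: spanning_tree_def)
  have finT: "finite T" and edges: "\<forall>e\<in>T. card (ends e) = 2"
    using assms(1) TE finite_subset unfolding mgraph_def by blast+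
  have "V \<subseteq> (\<Union>e\<in>T. ends e)"
  proof
    fix u assume "u \<in> V"
    have "\<not> V \<subseteq> {u}"
      using assms(3) by (auto simp: subset_singleton_iff)
    then obtain w where "w \<in> V" "w \<noteq> u" by blast
    then have "reach ends T u w"
      using conn \<open>u \<in> V\<close> unfolding connected_on_def by blast
    then have "\<not> (\<forall>e\<in>T. u \<notin> ends e)"
      using reach_isolated \<open>w \<noteq> u\<close> by metis
    then show "u \<in> (\<Union>e\<in>T. ends e)" by blast
  qed
  moreover have "finite (\<Union>e\<in>T. ends e)"
    using finT edges by (metis card.infinite finite_UN_I zero_neq_numeral)
  ultimately have "card V \<le> card (\<Union>e\<in>T. ends e)"
    by (rule card_mono[rotated])
  also have "\<dots> \<le> (\<Sum>e\<in>T. card (ends e))"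
    using finT by (rule card_UN_le)
  also have "\<dots> = 2 * card T"
    using edges by simp
  finally show ?thesis using assms(3) by linarith
qed

lemma spanning_tree_induced:
  assumes "spanning_tree V E ends T" "connected_on ends S (induced_edges ends S T)"
  shows "spanning_tree S (induced_edges ends S E) ends (induced_edges ends S T)"
  using assms acyclic_on_mono[of ends T "induced_edges ends S T"]
  unfolding spanning_tree_def induced_edges_def by blast

lemma bispanning_induced:
  assumes mg: "mgraph V E ends" and SV: "S \<subseteq> V"
    and T: "spanning_tree V E ends T1" "spanning_tree V E ends T2" "T1 \<inter> T2 = {}" "T1 \<union> T2 = E"
    and conn: "connected_on ends S (induced_edges ends S T1)"
      "connected_on ends S (induced_edges ends S T2)"
  shows "bispanning S (induced_edges ends S E) ends"
proof -
  have "mgraph S (induced_edges ends S E) ends"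
    using mg SV unfolding mgraph_def induced_edges_def by (auto intro: finite_subset)
  moreover have "induced_edges ends S T1 \<inter> induced_edges ends S T2 = {}"
    "induced_edges ends S T1 \<union> induced_edges ends S T2 = induced_edges ends S E"
    using T(3,4) unfolding induced_edges_def by auto
  ultimately show ?thesis
    unfolding bispanning_def using spanning_tree_induced T(1,2) conn by blast
qed

lemma composite_if_induced_bispanning:
  assumes "bispanning V E ends" "S \<subseteq> V" "S \<noteq> V" "card S \<ge> 2"
    and "bispanning S (induced_edges ends S E) ends"
  shows "composite V E ends"
proof -
  have "subgraph S (induced_edges ends S E) V E ends"
    using assms(2) unfolding subgraph_def induced_edges_def by auto
  moreover have "(S, induced_edges ends S E) \<noteq> (V, E)" "card S \<noteq> 1"
    using assms(3,4) by auto
  ultimately show ?thesis unfolding composite_def using assms(1,5) by blast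
qed

lemma bispanning_induced_if_two_crossing:
  assumes bi: "bispanning V E ends" and SV: "S \<subseteq> V" "S \<noteq> {}" "S \<noteq> V"
    and cross: "card (crossing_edges ends S E) \<le> 2"
  shows "bispanning S (induced_edges ends S E) ends"
proof -
  obtain T1 T2 where T: "spanning_tree V E ends T1" "spanning_tree V E ends T2"
    "T1 \<inter> T2 = {}" "T1 \<union> T2 = E"
    using bi unfolding bispanning_def by blast
  have mg: "mgraph V E ends" using bi by (simp add: bispanning_def)
  then have finE: "finite E" and edges: "\<forall>e\<in>E. ends e \<subseteq> V \<and> card (ends e) = 2"
    by (auto simp: mgraph_def)
  have conn: "connected_on ends V T1" "connected_on ends V T2"
    using T(1,2) by (simp_all add: spanning_tree_def)
  obtain a b where "a \<in> S" "b \<in> V" "b \<notin> S" using SV by blast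
  then have "a \<in> V" using SV(1) by blast
  then have "reach ends T1 a b" "reach ends T2 a b"
    using conn \<open>b \<in> V\<close> unfolding connected_on_def by simp_all
  then have "crossing_edges ends S T1 \<noteq> {}" "crossing_edges ends S T2 \<noteq> {}"
    by (simp_all add: crossing_edges_nonempty[OF _ \<open>a \<in> S\<close> \<open>b \<notin> S\<close>])
  then obtain c1 c2 where c: "c1 \<in> crossing_edges ends S T1" "c2 \<in> crossing_edges ends S T2"
    by blast
  have T_sub: "T1 \<subseteq> E" "T2 \<subseteq> E" using T(4) by blast+
  have "c1 \<noteq> c2" using c T(3) unfolding crossing_edges_def by blast
  moreover have sub: "{c1, c2} \<subseteq> crossing_edges ends S E"
    using c crossing_edges_subset[OF T_sub(1), of ends S]
      crossing_edges_subset[OF T_sub(2), of ends S] by auto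
  moreover have "finite (crossing_edges ends S E)"
    using finE by (simp add: crossing_edges_def)
  moreover have "card (crossing_edges ends S E) \<le> card {c1, c2}"
    using cross \<open>c1 \<noteq> c2\<close> by simp
  ultimately have cross_E: "crossing_edges ends S E = {c1, c2}"
    using card_seteq[OF _ sub] by simp
  have "c1 \<in> T1" "c2 \<in> T2" using c by (simp_all add: crossing_edges_def)
  then have "{c1, c2} \<inter> T1 = {c1}" "{c1, c2} \<inter> T2 = {c2}" using T(3) by blast+
  then have one_crossing: "crossing_edges ends S T1 = {c1}" "crossing_edges ends S T2 = {c2}"
    using cross_E crossing_edges_subset[OF T_sub(1), of ends S]
      crossing_edges_subset[OF T_sub(2), of ends S] by simp_all
  have tree_edges: "\<forall>e\<in>T1. ends e \<subseteq> V \<and> card (ends e) = 2"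
    "\<forall>e\<in>T2. ends e \<subseteq> V \<and> card (ends e) = 2"
    using edges T_sub by blast+
  have "connected_on ends S (induced_edges ends S T1)"
    "connected_on ends S (induced_edges ends S T2)"
    using connected_on_induced_if_one_crossing[OF conn(1) tree_edges(1) SV(1) one_crossing(1)]
      connected_on_induced_if_one_crossing[OF conn(2) tree_edges(2) SV(1) one_crossing(2)] .
  then show ?thesis using bispanning_induced[OF mg SV(1) T] by blast
qed

lemma composite_if_two_crossing:
  assumes bi: "bispanning V E ends" and "card V \<ge> 3" and SV: "S \<subseteq> V" "S \<noteq> {}" "S \<noteq> V"
    and cross: "card (crossing_edges ends S E) \<le> 2"
  shows "composite V E ends"
proof -
  have finV: "finite V" and edges: "\<forall>e\<in>E. ends e \<subseteq> V"
    using bi by (auto simp: bispanning_def mgraph_def)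
  have "card S + card (V - S) = card V"
    using finV SV(1) by (metis card_Diff_subset card_mono finite_subset le_add_diff_inverse)
  then consider "card S \<ge> 2" | "card (V - S) \<ge> 2" using assms(2) by linarith
  then show ?thesis
  proof cases
    case 1
    then show ?thesis
      using composite_if_induced_bispanning[OF bi SV(1,3)]
        bispanning_induced_if_two_crossing[OF bi SV cross] by blast
  next
    case 2
    have "V - S \<subseteq> V" "V - S \<noteq> {}" "V - S \<noteq> V" using SV by blast+
    moreover have "card (crossing_edges ends (V - S) E) \<le> 2"
      using cross crossing_edges_Diff[OF edges] by simp
    ultimately show ?thesis
      using composite_if_induced_bispanning[OF bi _ _ 2]
        bispanning_induced_if_two_crossing[OF bi] by blast
  qed
qed

lemma spanning_tree_single_edge:
  assumes "ends e = {x, y}" "x \<noteq> y" "e \<in> E"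
  shows "spanning_tree {x, y} E ends {e}"
  unfolding spanning_tree_def
proof (intro conjI)
  show "{e} \<subseteq> E" using assms by simp
  have "reach ends {e} x y" using reach_edge[of e "{e}" ends x y] assms by simp
  then show "connected_on ends {x, y} {e}"
    by (intro connected_onI[of x]) (auto intro: reach_refl)
  show "acyclic_on ends {e}"
    unfolding acyclic_on_def
  proof (intro ballI allI impI notI)
    fix f a b assume "f \<in> {e}" "ends f = {a, b}" "reach ends ({e} - {f}) a b"
    then have "reach ends {} a b" "ends e = {a, b}" by auto
    then have "b = a" "ends e = {a, b}" using reach_isolated[of ends "{}" a b] by auto
    then show False using assms(1,2) by (simp add: doubleton_eq_iff)
  qed
qed

lemma composite_if_parallel_edges:
  assumes bi: "bispanning V E ends" and "card V \<ge> 3" and "has_parallel_edges E ends"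
  shows "composite V E ends"
proof -
  obtain e1 e2 where e: "e1 \<in> E" "e2 \<in> E" "e1 \<noteq> e2" "ends e1 = ends e2"
    using assms(3) unfolding has_parallel_edges_def by blast
  have "ends e1 \<subseteq> V" "card (ends e1) = 2"
    using bi e(1) by (auto simp: bispanning_def mgraph_def)
  then obtain x y where xy: "ends e1 = {x, y}" "x \<noteq> y" "{x, y} \<subseteq> V"
    by (auto simp: card_2_iff)
  have "spanning_tree {x, y} {e1, e2} ends {e1}" "spanning_tree {x, y} {e1, e2} ends {e2}"
    using xy e by (simp_all add: spanning_tree_single_edge)
  moreover have "mgraph {x, y} {e1, e2} ends"
    unfolding mgraph_def using xy e by auto
  ultimately have "bispanning {x, y} {e1, e2} ends"
    unfolding bispanning_def using e(3) by blast
  moreover have "subgraph {x, y} {e1, e2} V E ends"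
    unfolding subgraph_def using xy e by auto
  moreover have "card {x, y} = 2" using xy by simp
  then have "({x, y}, {e1, e2}) \<noteq> (V, E)" "card {x, y} \<noteq> 1"
    using assms(2) by auto
  ultimately show ?thesis
    unfolding composite_def using bi by blast
qed

lemma composite_if_degree_2:
  assumes bi: "bispanning V E ends" and "card V \<ge> 3" and "v \<in> V" and "degree E ends v = 2"
  shows "composite V E ends"
proof (rule composite_if_two_crossing[OF bi assms(2)])
  have "\<not> ends e \<subseteq> {v}" if "e \<in> E" for e
  proof
    assume "ends e \<subseteq> {v}"
    then have "card (ends e) \<le> 1" using card_mono[of "{v}" "ends e"] by simp
    moreover have "card (ends e) = 2" using bi that by (auto simp: bispanning_def mgraph_def)
    ultimately show False by simp
  qed
  then have "crossing_edges ends {v} E = {e\<in>E. v \<in> ends e}"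
    by (auto simp: crossing_edges_def)
  then show "card (crossing_edges ends {v} E) \<le> 2"
    using assms(4) by (simp add: degree_def)
  show "{v} \<noteq> V" using assms(2) by auto
qed (use assms(3) in auto)

lemma crossing_edges_component_subset:
  assumes edges: "\<forall>e\<in>E. ends e \<subseteq> V \<and> card (ends e) = 2"
  shows "crossing_edges ends {z\<in>V. reach ends (E - F) u z} E \<subseteq> F"
proof
  fix e assume "e \<in> crossing_edges ends {z\<in>V. reach ends (E - F) u z} E"
  then obtain x y where e: "e \<in> E" and x: "x \<in> ends e" "reach ends (E - F) u x"
    and y: "y \<in> ends e" "y \<notin> V \<or> \<not> reach ends (E - F) u y"
    unfolding crossing_edges_def by blast
  have "ends e \<subseteq> V" "card (ends e) = 2" using edges e by simp_all
  then have "\<not> reach ends (E - F) u y" using y by blast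
  then have "x \<noteq> y" using x(2) by blast
  then have "ends e = {x, y}"
    using card_2_eq_doubleton[of "ends e" x y] \<open>card (ends e) = 2\<close> x(1) y(1) by blast
  show "e \<in> F"
  proof (rule ccontr)
    assume "e \<notin> F"
    then have "reach ends (E - F) x y"
      using reach_edge[of e "E - F" ends x y] \<open>ends e = {x, y}\<close> e by blast
    then show False using reach_trans[OF x(2)] \<open>\<not> reach ends (E - F) u y\<close> by blast
  qed
qed

lemma edge_connectivity_geI:
  assumes "finite E" "card E > k" "\<forall>F. F \<subseteq> E \<and> card F < k \<longrightarrow> connected_on ends V (E - F)"
  shows "k \<le> edge_connectivity V E ends"
  unfolding edge_connectivity_def
  by (rule Greatest_le_nat[where b = "card E"]) (use assms in auto)

lemma composite_if_edge_connectivity_2: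
  assumes bi: "bispanning V E ends" and "card V \<ge> 3" and "edge_connectivity V E ends = 2"
  shows "composite V E ends"
proof -
  obtain T1 T2 where T: "spanning_tree V E ends T1" "spanning_tree V E ends T2"
    "T1 \<inter> T2 = {}" "T1 \<union> T2 = E"
    using bi unfolding bispanning_def by blast
  have mg: "mgraph V E ends" using bi by (simp add: bispanning_def)
  then have finE: "finite E" and edges: "\<forall>e\<in>E. ends e \<subseteq> V \<and> card (ends e) = 2"
    by (auto simp: mgraph_def)
  have "card E = card T1 + card T2"
    using card_Un_disjoint[of T1 T2] T(3,4) finE by (metis finite_Un)
  moreover have "card T1 \<ge> 2" "card T2 \<ge> 2"
    using spanning_tree_card_ge_2[OF mg _ assms(2)] T(1,2) by blast+
  ultimately have "card E > 3" by linarith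
  then obtain F where F: "F \<subseteq> E" "card F < 3" "\<not> connected_on ends V (E - F)"
    using edge_connectivity_geI[OF finE, of 3 ends V] assms(3) by auto
  moreover have "V \<noteq> {}" using assms(2) by auto
  ultimately obtain u w where "u \<in> V" "w \<in> V" "\<not> reach ends (E - F) u w"
    unfolding connected_on_def by blast
  define S where "S = {z\<in>V. reach ends (E - F) u z}"
  have "u \<in> S" "w \<notin> S"
    unfolding S_def using \<open>u \<in> V\<close> \<open>\<not> reach ends (E - F) u w\<close> by (simp_all add: reach_refl)
  then have "S \<subseteq> V" "S \<noteq> {}" "S \<noteq> V"
    unfolding S_def using \<open>w \<in> V\<close> by blast+
  moreover have "card (crossing_edges ends S E) \<le> card F"
    using crossing_edges_component_subset[OF edges] F(1) finE
    unfolding S_def by (meson card_mono finite_subset)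
  ultimately show ?thesis
    using composite_if_two_crossing[OF bi assms(2)] F(2) by simp
qed

lemma num_components_le_1:
  assumes "\<forall>u\<in>V. \<forall>w\<in>V. reach ends F u w"
  shows "num_components ends V F \<le> 1"
proof -
  have "{{u \<in> V. reach ends F w u} | w. w \<in> V} \<subseteq> {V}" using assms by auto
  then show ?thesis
    unfolding num_components_def using card_mono[of "{V}"] by fastforce
qed

lemma num_components_connected: "connected_on ends V F \<Longrightarrow> num_components ends V F = 1"
proof -
  assume "connected_on ends V F"
  then have "{{u \<in> V. reach ends F w u} | w. w \<in> V} = {V}"
    unfolding connected_on_def by auto
  then show ?thesis unfolding num_components_def by simp
qed

lemma component_delete_vertex_closed:
  assumes edges: "\<forall>e\<in>E. ends e \<subseteq> V \<and> card (ends e) = 2"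
    and C: "C = {u \<in> V - {v}. reach ends (delete_vertex_edges ends E v) w u}"
  shows "\<forall>e\<in>E. ends e \<inter> C \<noteq> {} \<longrightarrow> ends e \<subseteq> insert v C"
proof (intro ballI impI subsetI)
  fix e b assume e: "e \<in> E" "ends e \<inter> C \<noteq> {}" and b: "b \<in> ends e"
  then obtain a where a: "a \<in> ends e" "a \<in> C" by blast
  let ?Ev = "delete_vertex_edges ends E v"
  show "b \<in> insert v C"
  proof (cases "b = v \<or> b = a")
    case True then show ?thesis using a(2) by blast
  next
    case False
    have "ends e \<subseteq> V" "card (ends e) = 2" using edges e(1) by simp_all
    then have ab: "ends e = {a, b}"
      using card_2_eq_doubleton[of "ends e" a b] a(1) b False by blast
    have "a \<noteq> v" "reach ends ?Ev w a" using a(2) unfolding C by simp_all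
    then have "e \<in> ?Ev" using False e(1) ab unfolding delete_vertex_edges_def by auto
    then have "reach ends ?Ev w b" using reach_trans[OF \<open>reach ends ?Ev w a\<close> reach_edge] ab by blast
    then show ?thesis using False b \<open>ends e \<subseteq> V\<close> unfolding C by blast
  qed
qed

lemma composite_if_cut_vertex:
  assumes bi: "bispanning V E ends" and "card V \<ge> 3" and cv: "cut_vertex V E ends v"
  shows "composite V E ends"
proof -
  obtain T1 T2 where T: "spanning_tree V E ends T1" "spanning_tree V E ends T2"
    "T1 \<inter> T2 = {}" "T1 \<union> T2 = E"
    using bi unfolding bispanning_def by blast
  have mg: "mgraph V E ends" using bi by (simp add: bispanning_def)
  then have edges: "\<forall>e\<in>E. ends e \<subseteq> V \<and> card (ends e) = 2"
    by (simp add: mgraph_def)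
  define Ev where "Ev = delete_vertex_edges ends E v"
  have "v \<in> V" and "num_components ends (V - {v}) Ev > 1"
    using cv num_components_connected[OF bispanning_connected[OF bi]]
    unfolding cut_vertex_def Ev_def by auto
  then obtain w1 w2 where w: "w1 \<in> V - {v}" "w2 \<in> V - {v}" "\<not> reach ends Ev w1 w2"
    using num_components_le_1 by (metis not_le)
  define C where "C = {u \<in> V - {v}. reach ends Ev w1 u}"
  define S where "S = insert v C"
  have "w1 \<in> C" "w2 \<notin> C" using w reach_refl unfolding C_def by auto
  have S: "S \<subseteq> V" "v \<in> S" "S \<noteq> V" "S - {v} = C"
    using \<open>v \<in> V\<close> \<open>w2 \<notin> C\<close> w(2) unfolding S_def C_def by auto
  have "finite S" using S(1) mg finite_subset unfolding mgraph_def by blast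
  moreover have "{v, w1} \<subseteq> S" using \<open>w1 \<in> C\<close> unfolding S_def by blast
  ultimately have "card {v, w1} \<le> card S" by (rule card_mono)
  moreover have "card {v, w1} = 2" using w(1) by auto
  ultimately have "card S \<ge> 2" by simp
  have closed: "\<forall>e\<in>E. ends e \<inter> (S - {v}) \<noteq> {} \<longrightarrow> ends e \<subseteq> S"
    using component_delete_vertex_closed[OF edges C_def[unfolded Ev_def]] S(4)
    unfolding S_def by simp
  have "\<forall>e\<in>T1. ends e \<inter> (S - {v}) \<noteq> {} \<longrightarrow> ends e \<subseteq> S"
    "\<forall>e\<in>T2. ends e \<inter> (S - {v}) \<noteq> {} \<longrightarrow> ends e \<subseteq> S"
    using closed T(4) by blast+
  moreover have "connected_on ends V T1" "connected_on ends V T2"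
    using T(1,2) by (simp_all add: spanning_tree_def)
  ultimately have "connected_on ends S (induced_edges ends S T1)"
    "connected_on ends S (induced_edges ends S T2)"
    using connected_on_induced_if_attached_at[OF _ S(1,2)] by blast+
  then have "bispanning S (induced_edges ends S E) ends"
    by (rule bispanning_induced[OF mg S(1) T])
  then show ?thesis
    by (rule composite_if_induced_bispanning[OF bi S(1,3) \<open>card S \<ge> 2\<close>])
qed

theorem mainTheorem8:
  fixes V :: "'v set" and E :: "'e set" and ends :: "'e \<Rightarrow> 'v set"
  assumes "bispanning V E ends" and "card V \<ge> 3"
  shows "(has_parallel_edges E ends \<longrightarrow> composite V E ends)
       \<and> (atomic V E ends \<longrightarrow> simple_graph E ends)
       \<and> ((\<exists>v. cut_vertex V E ends v) \<longrightarrow> composite V E ends)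
       \<and> (edge_connectivity V E ends = 2 \<longrightarrow> composite V E ends)
       \<and> ((\<exists>v\<in>V. degree E ends v = 2) \<longrightarrow> composite V E ends)"
  using composite_if_parallel_edges[OF assms] composite_if_cut_vertex[OF assms]
    composite_if_edge_connectivity_2[OF assms] composite_if_degree_2[OF assms]
  unfolding atomic_def simple_graph_def by blast

end
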